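(* For real $z<1$, $z\ne0$, \[ 2\frac{E(z)}{K(z)}=2-z-\cfrac{z^2}{4(2-z)-\cfrac{9z^2}{8(2-z)-\cfrac{25z^2}{12(2-z)-\cfrac{49z^2}{16(2-z)-\cdots}}}}, \] i.e. the continued fraction with $a(0)=2-z$, $a(n)=4n(2-z)$ for $n\ge1$, and $b(n)=-(2n+1)^2z^2$ for $n\ge0$. Moreover, with $p(n)/q(n)$ its $n$-th convergent, as $n\to\infty$ \[ 2\frac{E(z)}{K(z)}-\frac{p(n)}{q(n)}\sim-\frac{2\pi/K(z)^2}{\big((1+\sqrt{1-z})^2/z\big)^{2n+2}}. \]
   Context: $K(z)=\frac\pi2\,{}_2F_1(\tfrac12,\tfrac12;1;z)$ and $E(z)=\frac\pi2\,{}_2F_1(-\tfrac12,\tfrac12;1;z)$ (note the argument is $z$, not $k$ with $z=k^2$). For sequences $a(n),b(n)$, the continued fraction is $a(0)+\cfrac{b(0)}{a(1)+\cfrac{b(1)}{a(2)+\cdots}}$ and its $n$-th convergent $p(n)/q(n)$ is the truncation ending with $b(n-1)/a(n)$. *)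

theory Defs
  imports "HOL-Analysis.Analysis" "HOL-Library.Landau_Symbols"
begin

text \<open>Complete elliptic integrals in the parameter z (not the modulus k, z = k^2).
  For real z < 1 they are given by the standard integral representations, which equal
  (pi/2) 2F1(1/2,1/2;1;z) and (pi/2) 2F1(-1/2,1/2;1;z) for abs z < 1 and provide the
  analytic continuation to all z < 1.\<close>
definition ellK :: "real \<Rightarrow> real" where
  "ellK z = integral {0..pi/2} (\<lambda>t. 1 / sqrt (1 - z * (sin t)^2))"

definition ellE :: "real \<Rightarrow> real" where
  "ellE z = integral {0..pi/2} (\<lambda>t. sqrt (1 - z * (sin t)^2))"

text \<open>Numerators and denominators of the convergents of
  a(0) + b(0)/(a(1) + b(1)/(a(2) + ...)), via the standard recurrences with
  p(-1) = 1, q(-1) = 0, p(0) = a(0), q(0) = 1.\<close>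
fun cf_p :: "(nat \<Rightarrow> real) \<Rightarrow> (nat \<Rightarrow> real) \<Rightarrow> nat \<Rightarrow> real" where
  "cf_p a b 0 = a 0"
| "cf_p a b (Suc 0) = a 1 * a 0 + b 0"
| "cf_p a b (Suc (Suc n)) = a (Suc (Suc n)) * cf_p a b (Suc n) + b (Suc n) * cf_p a b n"

fun cf_q :: "(nat \<Rightarrow> real) \<Rightarrow> (nat \<Rightarrow> real) \<Rightarrow> nat \<Rightarrow> real" where
  "cf_q a b 0 = 1"
| "cf_q a b (Suc 0) = a 1"
| "cf_q a b (Suc (Suc n)) = a (Suc (Suc n)) * cf_q a b (Suc n) + b (Suc n) * cf_q a b n"

end

theory Submission
  imports Defs
begin

definition cf_num :: "(nat \<Rightarrow> real) \<Rightarrow> (nat \<Rightarrow> real) \<Rightarrow> nat \<Rightarrow> real" where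
  "cf_num a b k = (if k = 0 then 1 else cf_p a b (k - 1))"

definition cf_den :: "(nat \<Rightarrow> real) \<Rightarrow> (nat \<Rightarrow> real) \<Rightarrow> nat \<Rightarrow> real" where
  "cf_den a b k = (if k = 0 then 0 else cf_q a b (k - 1))"

lemma cf_num_rec: "cf_num a b (Suc (Suc k)) = a (Suc k) * cf_num a b (Suc k) + b k * cf_num a b k"
  by (cases k) (simp_all add: cf_num_def)

lemma cf_den_rec: "cf_den a b (Suc (Suc k)) = a (Suc k) * cf_den a b (Suc k) + b k * cf_den a b k"
  by (cases k) (simp_all add: cf_den_def)

lemma cf_recurrence_solution:
  assumes rec: "\<And>k. X (Suc (Suc k)) = a (Suc k) * X (Suc k) + b k * X k"
  shows "X k = X 0 * cf_num a b k + (X 1 - a 0 * X 0) * cf_den a b k"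
proof (induction k rule: induct_nat_012)
  case (ge2 k)
  then show ?case
    unfolding rec cf_num_rec cf_den_rec ge2.IH by (simp add: algebra_simps)
qed (simp_all add: cf_num_def cf_den_def)

lemma cf_den_casoratian:
  assumes rec: "\<And>k. X (Suc (Suc k)) = a (Suc k) * X (Suc k) + b k * X k"
  shows "cf_den a b (Suc k) * X k - cf_den a b k * X (Suc k) = X 0 * (\<Prod>j<k. - b j)"
proof (induction k)
  case (Suc k)
  have "cf_den a b (Suc (Suc k)) * X (Suc k) - cf_den a b (Suc k) * X (Suc (Suc k))
      = - b k * (cf_den a b (Suc k) * X k - cf_den a b k * X (Suc k))"
    unfolding rec cf_den_rec by (simp add: algebra_simps)
  then show ?case
    using Suc.IH by (simp add: mult_ac)
qed (simp add: cf_den_def)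

lemma cf_den_over_solution:
  assumes rec: "\<And>k. X (Suc (Suc k)) = a (Suc k) * X (Suc k) + b k * X k"
    and nz: "\<And>k. X k \<noteq> 0"
  shows "cf_den a b k / X k = (\<Sum>j<k. X 0 * (\<Prod>i<j. - b i) / (X j * X (Suc j)))"
proof (induction k)
  case (Suc k)
  have "cf_den a b (Suc k) / X (Suc k) - cf_den a b k / X k
      = (cf_den a b (Suc k) * X k - cf_den a b k * X (Suc k)) / (X k * X (Suc k))"
    using nz[of k] nz[of "Suc k"] by (simp add: field_simps)
  then show ?case
    using Suc.IH by (simp add: cf_den_casoratian[where X = X, OF rec])
qed (simp add: cf_den_def)

lemma cf_error_formula:
  assumes rec: "\<And>k. X (Suc (Suc k)) = a (Suc k) * X (Suc k) + b k * X k"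
    and nz: "\<And>k. X k \<noteq> 0"
    and S_nz: "(\<Sum>j\<le>n. X 0 * (\<Prod>i<j. - b i) / (X j * X (Suc j))) \<noteq> 0"
  shows "(a 0 * X 0 - X 1) / X 0 - cf_p a b n / cf_q a b n
    = - 1 / (X 0 * (\<Sum>j\<le>n. X 0 * (\<Prod>i<j. - b i) / (X j * X (Suc j))))"
proof -
  define S where "S = (\<Sum>j\<le>n. X 0 * (\<Prod>i<j. - b i) / (X j * X (Suc j)))"
  have q: "cf_q a b n = X (Suc n) * S"
    using cf_den_over_solution[where X = X, OF rec nz, of "Suc n"] nz[of "Suc n"]
    by (simp add: S_def cf_den_def lessThan_Suc_atMost field_simps)
  have p: "X (Suc n) = X 0 * cf_p a b n + (X 1 - a 0 * X 0) * cf_q a b n"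
    using cf_recurrence_solution[where X = X, OF rec, of "Suc n"] by (simp add: cf_num_def cf_den_def)
  have "(a 0 * X 0 - X 1) / X 0 - cf_p a b n / cf_q a b n
      = - (X 0 * cf_p a b n + (X 1 - a 0 * X 0) * cf_q a b n) / (X 0 * cf_q a b n)"
    using nz[of 0] nz[of "Suc n"] S_nz unfolding S_def[symmetric] q by (simp add: field_simps)
  also have "\<dots> = - X (Suc n) / (X 0 * cf_q a b n)"
    by (simp add: p)
  also have "\<dots> = - 1 / (X 0 * S)"
    using nz[of "Suc n"] by (simp add: q)
  finally show ?thesis unfolding S_def .
qed

lemma fundamental_theorem_of_calculus_real:
  fixes f f' :: "real \<Rightarrow> real"
  assumes "a \<le> b" "\<And>x. x \<in> {a..b} \<Longrightarrow> (f has_real_derivative f' x) (at x within {a..b})"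
  shows "(f' has_integral (f b - f a)) {a..b}"
  using assms by (intro fundamental_theorem_of_calculus)
    (auto simp: has_real_derivative_iff_has_vector_derivative[symmetric])

definition ell_delta :: "real \<Rightarrow> real \<Rightarrow> real" where
  "ell_delta z t = 1 - z * sin t ^ 2"

lemma ell_delta_pos:
  assumes "z < 1" shows "ell_delta z t > 0"
proof -
  have "sin t ^ 2 \<le> 1" "0 \<le> sin t ^ 2"
    by (simp_all add: abs_square_le_1)
  then have "z * sin t ^ 2 \<le> max z 0"
    by (cases "z \<le> 0") (auto intro: mult_nonpos_nonneg mult_left_le)
  then show ?thesis
    using assms by (simp add: ell_delta_def)
qed

lemma ell_delta_nonzero: "z < 1 \<Longrightarrow> ell_delta z t \<noteq> 0"
  using ell_delta_pos[of z t] by simp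

lemma ell_delta_nonneg: "z < 1 \<Longrightarrow> ell_delta z t \<ge> 0"
  using ell_delta_pos[of z t] by simp

lemma ell_delta_has_derivative:
  "(ell_delta z has_real_derivative - 2 * z * sin t * cos t) (at t within S)"
  unfolding ell_delta_def by (auto intro!: derivative_eq_intros simp: power2_eq_square)

lemma sqrt_ell_delta_has_derivative:
  assumes "z < 1"
  shows "((\<lambda>t. sqrt (ell_delta z t)) has_real_derivative - z * sin t * cos t / sqrt (ell_delta z t))
    (at t within S)"
  using DERIV_chain2[OF DERIV_real_sqrt ell_delta_has_derivative, OF ell_delta_pos[OF assms]]
  by (simp add: field_simps)

lemma continuous_on_ell_delta: "continuous_on S (ell_delta z)"
  unfolding ell_delta_def by (intro continuous_intros)

lemma has_integral_ellK:
  assumes "z < 1"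
  shows "((\<lambda>t. 1 / sqrt (ell_delta z t)) has_integral ellK z) {0..pi/2}"
  unfolding ellK_def ell_delta_def[symmetric]
  by (intro integrable_integral integrable_continuous_interval continuous_intros
      continuous_on_ell_delta) (auto simp: ell_delta_nonzero ell_delta_nonneg assms)

lemma has_integral_ellE:
  "((\<lambda>t. sqrt (ell_delta z t)) has_integral ellE z) {0..pi/2}"
  unfolding ellE_def ell_delta_def[symmetric]
  by (intro integrable_integral integrable_continuous_interval continuous_intros
      continuous_on_ell_delta)

definition ell_G_integrand :: "real \<Rightarrow> nat \<Rightarrow> real \<Rightarrow> real" where
  "ell_G_integrand z k t = (sin t * cos t) ^ (2 * k) / (ell_delta z t ^ k * sqrt (ell_delta z t))"

definition ell_G :: "real \<Rightarrow> nat \<Rightarrow> real" where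
  "ell_G z k = z ^ (2 * k) * integral {0..pi/2} (ell_G_integrand z k)"

lemma continuous_on_ell_G_integrand:
  assumes "z < 1" shows "continuous_on S (ell_G_integrand z k)"
  unfolding ell_G_integrand_def
  by (intro continuous_intros continuous_on_ell_delta) (auto simp: ell_delta_nonzero ell_delta_nonneg assms)

lemma has_integral_ell_G_integrand:
  assumes "z < 1"
  shows "(ell_G_integrand z k has_integral integral {0..pi/2} (ell_G_integrand z k)) {0..pi/2}"
  by (intro integrable_integral integrable_continuous_interval continuous_on_ell_G_integrand assms)

lemma ell_G_integrand_pos:
  assumes "z < 1" "t \<in> {0<..<pi/2}" shows "ell_G_integrand z k t > 0"
  using assms sin_gt_zero[of t] cos_gt_zero[of t] ell_delta_pos[OF assms(1), of t]
  unfolding ell_G_integrand_def by (auto intro!: divide_pos_pos)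

lemma ell_G_pos:
  assumes "z < 1" "z \<noteq> 0" shows "ell_G z k > 0"
proof -
  have "integral {0..pi/2} (\<lambda>_. 0::real) < integral {0..pi/2} (ell_G_integrand z k)"
  proof (rule integral_less_real)
    show "{0<..<pi/2} \<noteq> {}"
      by (simp add: pi_gt_zero not_le)
  qed (use assms ell_G_integrand_pos continuous_on_ell_G_integrand in auto)
  then show ?thesis
    using assms(2) by (simp add: ell_G_def power_mult)
qed

lemma ell_G_0: "ell_G z 0 = ellK z"
  by (simp add: ell_G_def ellK_def ell_G_integrand_def[abs_def] ell_delta_def)

lemma ell_G_1:
  assumes z: "z < 1" shows "ell_G z 1 = (2 - z) * ellK z - 2 * ellE z"
proof -
  define Q where "Q t = sqrt (ell_delta z t)" for t
  have Q_pos: "Q t > 0" and Q_sq: "Q t * Q t = ell_delta z t" for t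
    using ell_delta_pos[OF z, of t] by (simp_all add: Q_def)
  define h' where "h' t = z * (cos t ^ 2 - sin t ^ 2) / Q t + z^2 * (sin t * cos t)^2 / (ell_delta z t * Q t)" for t
  have "((\<lambda>t. z * sin t * cos t / Q t) has_real_derivative h' t) (at t within S)" for t S
    unfolding Q_def
    by (rule DERIV_cong[OF DERIV_divide[OF _ sqrt_ell_delta_has_derivative[OF z]]],
        auto intro!: derivative_eq_intros simp: Q_def[symmetric] Q_pos[THEN less_imp_neq, symmetric])
      (use Q_pos[of t] in \<open>simp add: h'_def field_simps power2_eq_square Q_sq[symmetric]\<close>)
  then have "(h' has_integral (z * sin (pi/2) * cos (pi/2) / Q (pi/2) - z * sin 0 * cos 0 / Q 0)) {0..pi/2}"
    by (intro fundamental_theorem_of_calculus_real) auto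
  then have "(h' has_integral 0) {0..pi/2}"
    by simp
  then have "((\<lambda>t. (2 - z) * (1 / Q t) - 2 * Q t + h' t) has_integral
      (2 - z) * ellK z - 2 * ellE z + 0) {0..pi/2}"
    unfolding Q_def by (intro has_integral_add has_integral_diff has_integral_mult_right
        has_integral_ellK has_integral_ellE z) (simp add: Q_def)
  moreover have "(2 - z) * (1 / Q t) - 2 * Q t + h' t = z^2 * ell_G_integrand z 1 t" for t
  proof -
    have "(2 - z) * (1 / q) - 2 * q + (z * (c^2 - s^2) / q + z^2 * (s * c)^2 / (d * q))
        = z^2 * ((s * c)^2 / (d * q))"
      if "q > 0" "q * q = d" "d = 1 - z * s^2" "c^2 = 1 - s^2" for q d s c :: real
    proof -
      have "d > 0"
        using that by (metis mult_pos_pos)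
      then show ?thesis
        using that by (simp add: field_simps power2_eq_square) algebra
    qed
    from this[of "Q t" "ell_delta z t" "sin t" "cos t"]
    have "(2 - z) * (1 / Q t) - 2 * Q t + h' t = z^2 * ((sin t * cos t)^2 / (ell_delta z t * Q t))"
      unfolding h'_def using Q_pos Q_sq by (simp add: ell_delta_def cos_squared_eq)
    then show ?thesis
      by (simp add: ell_G_integrand_def Q_def)
  qed
  ultimately have "((\<lambda>t. z^2 * ell_G_integrand z 1 t) has_integral (2 - z) * ellK z - 2 * ellE z) {0..pi/2}"
    by simp
  from integral_unique[OF this] show ?thesis
    by (simp add: ell_G_def)
qed

definition ell_G_primitive :: "real \<Rightarrow> nat \<Rightarrow> real \<Rightarrow> real" where
  "ell_G_primitive z n t = (sin t * cos t) ^ Suc (2 * n) * (1/2 - sin t ^ 2 + z/2 * sin t ^ 4)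
     / (ell_delta z t ^ Suc n * sqrt (ell_delta z t))"

lemma ell_G_primitive_derivative_identity:
  fixes q d u v x y z m :: real
  assumes "q > 0" "y > 0" "q * q = d" "d = 1 - z * u * u" "v * v = 1 - u * u"
  shows "((x * (u * v)) * (- 2 * u * v + 2 * z * u^3 * v) + (1 + 2 * m) * ((v * v - u * u) * x) * (1/2 - u^2 + z/2 * u^4))
        * (y * d * q)
      - (x * (u * v)) * (1/2 - u^2 + z/2 * u^4) * (y * d * (- z * u * v / q) + (1 + m) * ((- 2 * z * u * v) * y) * q)
    = ((m + 3/2) * z^2 * (x * (u * v)^4 / (y * d^2 * q)) - 2 * (m + 1) * (2 - z) * (x * (u * v)^2 / (y * d * q))
        + (m + 1/2) * (x / (y * q))) * ((y * d * q) * (y * d * q))"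
proof -
  have "d > 0"
    using assms by (metis mult_pos_pos)
  then show ?thesis
    using assms by (simp add: field_simps power2_eq_square) algebra
qed

lemma ell_G_primitive_has_derivative:
  assumes z: "z < 1"
  shows "(ell_G_primitive z n has_real_derivative
     (real n + 3/2) * z^2 * ell_G_integrand z (n + 2) t - 2 * (real n + 1) * (2 - z) * ell_G_integrand z (n + 1) t
       + (real n + 1/2) * ell_G_integrand z n t) (at t within S)"
proof -
  let ?s = "sin t" and ?c = "cos t" and ?D = "ell_delta z t" and ?Q = "sqrt (ell_delta z t)"
  let ?X = "(sin t * cos t) ^ (2 * n)" and ?Y = "ell_delta z t ^ n"
  have Q: "?Q > 0" "?Q * ?Q = ?D" and Y: "?Y > 0"
    using ell_delta_pos[OF z, of t] by simp_all
  have D: "?D = 1 - z * ?s * ?s" and c: "?c * ?c = 1 - ?s * ?s"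
    by (simp_all add: ell_delta_def power2_eq_square cos_squared_eq flip: power2_eq_square)
  have dsc: "((\<lambda>t. sin t * cos t) has_real_derivative ?c * ?c - ?s * ?s) (at t within S)"
    by (auto intro!: derivative_eq_intros simp: algebra_simps)
  have dL: "((\<lambda>t. 1/2 - sin t ^ 2 + z/2 * sin t ^ 4) has_real_derivative - 2 * ?s * ?c + 2 * z * ?s^3 * ?c)
      (at t within S)"
    by (auto intro!: derivative_eq_intros simp: algebra_simps power2_eq_square power3_eq_cube power4_eq_xxxx)
  note dN = DERIV_mult'[OF DERIV_power_Suc[OF dsc, where n = "2 * n"] dL]
  note dM = DERIV_mult'[OF DERIV_power_Suc[OF ell_delta_has_derivative[of z t S], where n = n]
      sqrt_ell_delta_has_derivative[OF z]]
  note identity = ell_G_primitive_derivative_identity[OF Q(1) Y Q(2) D c, where x = ?X and m = "real n"]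
  have e1: "(sin t * cos t) ^ Suc (2 * n) = ?X * (?s * ?c)" and e2: "ell_delta z t ^ Suc n = ?Y * ?D"
    by simp_all
  have "2 * (n + 2) = 2 * n + 4" "2 * (n + 1) = 2 * n + 2"
    by simp_all
  then have e3: "ell_G_integrand z (n + 2) t = ?X * (?s * ?c)^4 / (?Y * ?D^2 * ?Q)"
    and e4: "ell_G_integrand z (n + 1) t = ?X * (?s * ?c)^2 / (?Y * ?D * ?Q)"
    and e5: "ell_G_integrand z n t = ?X / (?Y * ?Q)"
    unfolding ell_G_integrand_def by (simp_all only: power_add power_one_right)
  have key: "((sin t * cos t) ^ Suc (2 * n) * (- 2 * ?s * ?c + 2 * z * ?s^3 * ?c)
        + (1 + 2 * real n) * ((?c * ?c - ?s * ?s) * ?X) * (1/2 - ?s^2 + z/2 * ?s^4))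
        * (ell_delta z t ^ Suc n * ?Q)
      - (sin t * cos t) ^ Suc (2 * n) * (1/2 - ?s^2 + z/2 * ?s^4)
        * (ell_delta z t ^ Suc n * (- z * ?s * ?c / ?Q) + (1 + real n) * ((- 2 * z * ?s * ?c) * ?Y) * ?Q)
    = ((real n + 3/2) * z^2 * ell_G_integrand z (n + 2) t - 2 * (real n + 1) * (2 - z) * ell_G_integrand z (n + 1) t
        + (real n + 1/2) * ell_G_integrand z n t) * ((ell_delta z t ^ Suc n * ?Q) * (ell_delta z t ^ Suc n * ?Q))"
    unfolding e1 e2 e3 e4 e5 by (rule identity)
  have M: "ell_delta z t ^ Suc n * ?Q \<noteq> 0"
    using Q Y by simp
  show ?thesis
    unfolding ell_G_primitive_def[abs_def]
    by (rule DERIV_cong[OF DERIV_divide[OF dN dM M]])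
      (unfold of_nat_mult of_nat_numeral key, simp add: ell_delta_nonzero[OF z])
qed

lemma ell_G_integral_rec:
  assumes z: "z < 1"
  shows "(real n + 3/2) * z^2 * integral {0..pi/2} (ell_G_integrand z (n + 2))
    - 2 * (real n + 1) * (2 - z) * integral {0..pi/2} (ell_G_integrand z (n + 1))
    + (real n + 1/2) * integral {0..pi/2} (ell_G_integrand z n) = 0"
proof -
  have ftc: "((\<lambda>t. (real n + 3/2) * z^2 * ell_G_integrand z (n + 2) t
        - 2 * (real n + 1) * (2 - z) * ell_G_integrand z (n + 1) t + (real n + 1/2) * ell_G_integrand z n t)
      has_integral ell_G_primitive z n (pi/2) - ell_G_primitive z n 0) {0..pi/2}"
    by (intro fundamental_theorem_of_calculus_real ell_G_primitive_has_derivative z) simp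
  have "((\<lambda>t. (real n + 3/2) * z^2 * ell_G_integrand z (n + 2) t
        - 2 * (real n + 1) * (2 - z) * ell_G_integrand z (n + 1) t + (real n + 1/2) * ell_G_integrand z n t)
      has_integral (real n + 3/2) * z^2 * integral {0..pi/2} (ell_G_integrand z (n + 2))
        - 2 * (real n + 1) * (2 - z) * integral {0..pi/2} (ell_G_integrand z (n + 1))
        + (real n + 1/2) * integral {0..pi/2} (ell_G_integrand z n)) {0..pi/2}"
    by (intro has_integral_add has_integral_diff has_integral_mult_right has_integral_ell_G_integrand z)
  from has_integral_unique[OF this ftc] show ?thesis
    by (simp add: ell_G_primitive_def)
qed

lemma ell_G_rec:
  assumes z: "z < 1" and k: "k \<ge> 1"
  shows "(2 * real k + 1) * ell_G z (k + 1)
    = 4 * real k * (2 - z) * ell_G z k - (2 * real k - 1) * z^2 * ell_G z (k - 1)"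
proof -
  obtain n where n: "k = n + 1"
    using k by (cases k) auto
  define I where "I j = integral {0..pi/2} (ell_G_integrand z j)" for j
  have rec: "(real n + 3/2) * z^2 * I (n + 2) = 2 * (real n + 1) * (2 - z) * I (n + 1) - (real n + 1/2) * I n"
    using ell_G_integral_rec[OF z, of n] unfolding I_def by linarith
  have pow: "z ^ (2 * (n + 2)) = z ^ (2 * n + 2) * z^2" "z ^ (2 * (n + 1)) = z ^ (2 * n + 2)"
    "z ^ (2 * n) * z^2 = z ^ (2 * n + 2)"
    by (simp_all add: power_add power2_eq_square)
  have "(2 * real k + 1) * ell_G z (k + 1) = 2 * z ^ (2 * n + 2) * ((real n + 3/2) * z^2 * I (n + 2))"
    unfolding ell_G_def I_def[symmetric] n pow by (simp add: algebra_simps power2_eq_square)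
  also have "\<dots> = 2 * z ^ (2 * n + 2) * (2 * (real n + 1) * (2 - z) * I (n + 1) - (real n + 1/2) * I n)"
    unfolding rec ..
  also have "\<dots> = 4 * real k * (2 - z) * ell_G z k - (2 * real k - 1) * z^2 * ell_G z (k - 1)"
    unfolding ell_G_def I_def[symmetric] n pow(2) by (simp add: algebra_simps power2_eq_square flip: pow(3))
  finally show ?thesis .
qed

lemma ell_G_cf_recurrence:
  fixes z :: real
  assumes "z < 1"
  defines "a \<equiv> (\<lambda>n::nat. if n = 0 then 2 - z else 4 * real n * (2 - z))"
    and "b \<equiv> (\<lambda>n::nat. - ((2 * real n + 1)^2 * z^2))"
    and "X \<equiv> (\<lambda>k. (\<Prod>j<k. 2 * real j + 1) * ell_G z k)"
  shows "X (Suc (Suc k)) = a (Suc k) * X (Suc k) + b k * X k"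
proof -
  define d where "d k = (\<Prod>j<k. 2 * real j + 1)" for k
  have "X (Suc (Suc k)) = d (Suc k) * ((2 * real (Suc k) + 1) * ell_G z (Suc k + 1))"
    by (simp add: X_def d_def)
  also have "\<dots> = d (Suc k) * (4 * real (Suc k) * (2 - z) * ell_G z (Suc k) - (2 * real k + 1) * z^2 * ell_G z k)"
    using ell_G_rec[OF assms(1), of "Suc k"] by simp
  also have "\<dots> = a (Suc k) * X (Suc k) + b k * X k"
    by (simp add: a_def b_def X_def d_def algebra_simps power2_eq_square)
  finally show ?thesis .
qed

definition ell_cf_term :: "real \<Rightarrow> nat \<Rightarrow> real" where
  "ell_cf_term z j = ellK z * z ^ (2 * j) / ((2 * real j + 1) * ell_G z j * ell_G z (Suc j))"

lemma ell_cf_term_pos: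
  assumes "z < 1" "z \<noteq> 0"
  shows "ell_cf_term z j > 0"
proof -
  have "ellK z > 0"
    using ell_G_pos[OF assms, of 0] by (simp add: ell_G_0)
  moreover have "z ^ (2 * j) > 0"
    using assms(2) by (simp add: power_mult)
  ultimately show ?thesis
    unfolding ell_cf_term_def using ell_G_pos[OF assms] by (intro divide_pos_pos mult_pos_pos) auto
qed

lemma ell_cf_term_casoratian:
  "ell_cf_term z j = ell_G z 0 * (\<Prod>i<j. (2 * real i + 1)^2 * z^2)
    / (((\<Prod>i<j. 2 * real i + 1) * ell_G z j) * ((\<Prod>i<Suc j. 2 * real i + 1) * ell_G z (Suc j)))"
proof -
  define d where "d = (\<Prod>i<j. 2 * real i + 1)"
  have "d \<noteq> 0"
    unfolding d_def by (simp add: prod_pos less_imp_neq[symmetric])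
  have "ell_G z 0 * (\<Prod>i<j. (2 * real i + 1)^2 * z^2)
      / (((\<Prod>i<j. 2 * real i + 1) * ell_G z j) * ((\<Prod>i<Suc j. 2 * real i + 1) * ell_G z (Suc j)))
      = d ^ 2 * (ellK z * z ^ (2 * j)) / (d ^ 2 * ((2 * real j + 1) * ell_G z j * ell_G z (Suc j)))"
    by (simp add: d_def ell_G_0 prod.distrib power_mult_distrib power_mult power2_eq_square mult_ac
        flip: prod_power_distrib)
  also have "\<dots> = ell_cf_term z j"
    unfolding ell_cf_term_def by (rule mult_divide_mult_cancel_left) (simp add: \<open>d \<noteq> 0\<close>)
  finally show ?thesis ..
qed

lemma ell_cf_error:
  fixes z :: real
  assumes "z < 1" "z \<noteq> 0"
  defines "a \<equiv> (\<lambda>n::nat. if n = 0 then 2 - z else 4 * real n * (2 - z))"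
    and "b \<equiv> (\<lambda>n::nat. - ((2 * real n + 1)^2 * z^2))"
  shows "2 * ellE z / ellK z - cf_p a b n / cf_q a b n = - 1 / (ellK z * (\<Sum>j\<le>n. ell_cf_term z j))"
proof -
  define X where "X k = (\<Prod>j<k. 2 * real j + 1) * ell_G z k" for k
  have rec: "X (Suc (Suc k)) = a (Suc k) * X (Suc k) + b k * X k" for k
    using ell_G_cf_recurrence[OF assms(1)] unfolding a_def b_def X_def by blast
  have X0: "X 0 = ellK z"
    by (simp add: X_def ell_G_0)
  have terms: "X 0 * (\<Prod>i<j. - b i) / (X j * X (Suc j)) = ell_cf_term z j" for j
    unfolding ell_cf_term_casoratian by (simp add: X_def b_def)
  have nonzero: "X k \<noteq> 0" for k
    using ell_G_pos[OF assms(1,2)] by (simp add: X_def prod_pos less_imp_neq[symmetric])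
  have "(\<Sum>j\<le>n. X 0 * (\<Prod>i<j. - b i) / (X j * X (Suc j))) \<noteq> 0"
    unfolding terms using ell_cf_term_pos[OF assms(1,2)] by (simp add: sum_pos less_imp_neq[symmetric])
  from cf_error_formula[where X = X, OF rec nonzero this]
  have "(a 0 * X 0 - X 1) / X 0 - cf_p a b n / cf_q a b n = - 1 / (X 0 * (\<Sum>j\<le>n. ell_cf_term z j))"
    unfolding terms .
  moreover have "2 * ellE z / ellK z = (a 0 * X 0 - X 1) / X 0"
    using ell_G_1[OF assms(1)] by (simp add: X_def a_def ell_G_0)
  ultimately show ?thesis
    by (simp only: X0)
qed

definition wallis_integral :: "nat \<Rightarrow> real" where
  "wallis_integral k = integral {-1..1} (\<lambda>x. (1 - x^2) ^ k)"

lemma has_integral_wallis_integral: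
  "((\<lambda>x::real. (1 - x^2) ^ k) has_integral wallis_integral k) {-1..1}"
  unfolding wallis_integral_def
  by (intro integrable_integral integrable_continuous_interval continuous_intros)

lemma wallis_integral_0: "wallis_integral 0 = 2"
  by (simp add: wallis_integral_def)

lemma wallis_integral_rec: "(2 * real k + 3) * wallis_integral (k + 1) = 2 * (real k + 1) * wallis_integral k"
proof -
  have "((\<lambda>x::real. x * (1 - x^2) ^ Suc k) has_real_derivative
      (2 * real k + 3) * (1 - x^2) ^ (k + 1) - 2 * (real k + 1) * (1 - x^2) ^ k) (at x within S)" for x S
  proof -
    have "x * ((1 + real k) * (- 2 * x * (1 - x^2) ^ k)) = - 2 * (1 + real k) * (x * x) * (1 - x^2) ^ k"
      by (simp add: algebra_simps)
    also have "x * x = 1 - (1 - x^2)"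
      by (simp add: power2_eq_square)
    finally have "x * ((1 + real k) * (- 2 * x * (1 - x^2) ^ k)) + (1 - x^2) ^ Suc k
        = (2 * real k + 3) * (1 - x^2) ^ (k + 1) - 2 * (real k + 1) * (1 - x^2) ^ k"
      by (simp add: algebra_simps)
    then show ?thesis
      by (intro DERIV_cong[OF DERIV_mult'[OF DERIV_ident DERIV_power_Suc]])
        (auto intro!: derivative_eq_intros)
  qed
  then have ftc: "((\<lambda>x. (2 * real k + 3) * (1 - x^2) ^ (k + 1) - 2 * (real k + 1) * (1 - x^2) ^ k)
      has_integral 1 * (1 - 1^2) ^ Suc k - (-1) * (1 - (-1)^2) ^ Suc k) {-1..1}"
    by (intro fundamental_theorem_of_calculus_real) auto
  have "((\<lambda>x. (2 * real k + 3) * (1 - x^2) ^ (k + 1) - 2 * (real k + 1) * (1 - x^2) ^ k)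
      has_integral (2 * real k + 3) * wallis_integral (k + 1) - 2 * (real k + 1) * wallis_integral k) {-1..1}"
    by (intro has_integral_diff has_integral_mult_right has_integral_wallis_integral)
  from has_integral_unique[OF this ftc] show ?thesis
    by simp
qed

lemma wallis_integral_lower_bound: "wallis_integral k \<ge> 2 / (2 * real k + 1)"
proof (induction k)
  case 0
  then show ?case
    by (simp add: wallis_integral_0)
next
  case (Suc k)
  have "2 / (2 * real (Suc k) + 1) \<le> 2 * (real k + 1) / (2 * real k + 3) * (2 / (2 * real k + 1))"
    by (simp add: field_simps le_divide_eq add_pos_nonneg)
  also have "\<dots> \<le> 2 * (real k + 1) / (2 * real k + 3) * wallis_integral k"
    using Suc.IH by (intro mult_left_mono) auto
  also have "\<dots> = wallis_integral (Suc k)"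
    using wallis_integral_rec[of k] by (simp add: field_simps)
  finally show ?case .
qed

lemma wallis_integral_pos: "wallis_integral k > 0"
  using wallis_integral_lower_bound[of k] by (smt (verit) divide_pos_pos of_nat_0_le_iff)

lemma wallis_integral_product:
  "(real n + 1) * wallis_integral n * wallis_integral (n + 1)
    = 2 * (\<Prod>k=1..n+1. 4 * real k ^ 2 / (4 * real k ^ 2 - 1))"
proof (induction n)
  case 0
  have "wallis_integral 1 = 4 / 3"
    using wallis_integral_rec[of 0] by (simp add: wallis_integral_0)
  then show ?case
    by (simp add: wallis_integral_0)
next
  case (Suc n)
  define W where "W = wallis_integral"
  define f where "f k = 4 * real k ^ 2 / (4 * real k ^ 2 - 1)" for k
  have r0: "(2 * real n + 3) * W (n + 1) = 2 * (real n + 1) * W n"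
    and r1: "(2 * real n + 5) * W (n + 2) = 2 * (real n + 2) * W (n + 1)"
    using wallis_integral_rec[of n] wallis_integral_rec[of "n + 1"] by (simp_all add: W_def algebra_simps)
  have key: "(real n + 2) * W (n + 1) * W (n + 2) * ((2 * real n + 3) * (2 * real n + 5))
      = (real n + 1) * W n * W (n + 1) * (4 * (real n + 2) ^ 2)"
    using r0 r1 by algebra
  have den: "4 * (real n + 2) ^ 2 - 1 = (2 * real n + 3) * (2 * real n + 5)"
    by (simp add: power2_eq_square algebra_simps)
  have "(2 * real n + 3) * (2 * real n + 5) \<noteq> 0"
    by (simp add: add_pos_pos)
  then have "(real n + 2) * W (n + 1) * W (n + 2) = (real n + 1) * W n * W (n + 1) * f (n + 2)"
    unfolding f_def of_nat_add of_nat_numeral den times_divide_eq_right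
    by (subst nonzero_eq_divide_eq) (simp_all only: key not_False_eq_True)
  also have "\<dots> = 2 * (\<Prod>k=1..n+2. f k)"
    using Suc.IH prod.nat_ivl_Suc'[of 1 "Suc n" f] by (simp add: W_def f_def)
  finally show ?case
    by (simp add: W_def f_def add_ac)
qed

lemma wallis_integral_product_limit:
  "(\<lambda>n. (2 * real n + 1) * wallis_integral n * wallis_integral (n + 1)) \<longlonglongrightarrow> 2 * pi"
proof -
  define P where "P n = (\<Prod>k=1..n. 4 * real k ^ 2 / (4 * real k ^ 2 - 1))" for n
  have "(\<lambda>n. 2 * (2 * real n + 1) / (real n + 1) * P (n + 1)) \<longlonglongrightarrow> 2 * 2 * (pi / 2)"
    unfolding P_def by (intro tendsto_mult LIMSEQ_ignore_initial_segment[OF wallis, of 1] tendsto_const) real_asymp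
  moreover have "(2 * real n + 1) * wallis_integral n * wallis_integral (n + 1)
      = 2 * (2 * real n + 1) / (real n + 1) * P (n + 1)" for n
  proof -
    have "(2 * real n + 1) * wallis_integral n * wallis_integral (n + 1)
        = (2 * real n + 1) / (real n + 1) * ((real n + 1) * wallis_integral n * wallis_integral (n + 1))"
      by (simp add: field_simps)
    then show ?thesis
      unfolding wallis_integral_product P_def by simp
  qed
  ultimately show ?thesis
    by simp
qed

lemma power_over_wallis_integral_tendsto_0:
  assumes "0 \<le> q" "q < 1"
  shows "(\<lambda>k. q ^ k / wallis_integral k) \<longlonglongrightarrow> 0"
proof (rule tendsto_sandwich)
  show "\<forall>\<^sub>F k in sequentially. 0 \<le> q ^ k / wallis_integral k"
    using assms wallis_integral_pos by (intro always_eventually allI divide_nonneg_pos) auto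
  show "\<forall>\<^sub>F k in sequentially. q ^ k / wallis_integral k \<le> (real k * q ^ k + q ^ k / 2)"
  proof (intro always_eventually allI)
    fix k
    have "q ^ k / wallis_integral k \<le> q ^ k / (2 / (2 * real k + 1))"
      using assms wallis_integral_pos wallis_integral_lower_bound by (intro divide_left_mono) auto
    then show "q ^ k / wallis_integral k \<le> real k * q ^ k + q ^ k / 2"
      by (simp add: field_simps)
  qed
  have "norm q < 1"
    using assms by simp
  then have "(\<lambda>k. real k * q ^ k + q ^ k / 2) \<longlonglongrightarrow> 0 + 0 / 2"
    by (intro tendsto_add tendsto_divide powser_times_n_limit_0 LIMSEQ_power_zero tendsto_const) auto
  then show "(\<lambda>k. real k * q ^ k + q ^ k / 2) \<longlonglongrightarrow> 0"
    by simp
qed simp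

lemma wallis_integral_window:
  assumes "-1 \<le> u" "u \<le> -e" "e \<le> v" "v \<le> 1" "0 < e"
  shows "integral {u..v} (\<lambda>x::real. (1 - x^2) ^ k) \<le> wallis_integral k"
    and "wallis_integral k - 2 * (1 - e^2) ^ k \<le> integral {u..v} (\<lambda>x::real. (1 - x^2) ^ k)"
proof -
  let ?f = "\<lambda>x::real. (1 - x^2) ^ k"
  have intg: "?f integrable_on {c..d}" for c d
    by (intro integrable_continuous_interval continuous_intros)
  have split: "integral {-1..u} ?f + integral {u..v} ?f + integral {v..1} ?f = wallis_integral k"
    unfolding wallis_integral_def using assms intg
    by (simp add: Henstock_Kurzweil_Integration.integral_combine)
  have tails: "0 \<le> integral {c..d} ?f" "integral {c..d} ?f \<le> (1 - e^2) ^ k"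
    if "{c..d} \<subseteq> {-1..1}" "c \<le> d" "d - c \<le> 1" "\<And>x. x \<in> {c..d} \<Longrightarrow> e \<le> \<bar>x\<bar>" for c d
  proof -
    have bounds: "0 \<le> ?f x" "?f x \<le> (1 - e^2) ^ k" if "x \<in> {c..d}" for x
    proof -
      have "x^2 \<le> 1"
        using \<open>{c..d} \<subseteq> {-1..1}\<close> \<open>x \<in> {c..d}\<close> by (auto simp: abs_square_le_1)
      moreover have "e^2 \<le> x^2"
        using power_mono[OF \<open>\<And>x. x \<in> {c..d} \<Longrightarrow> e \<le> \<bar>x\<bar>\<close>[OF that], of 2] \<open>0 < e\<close> by simp
      ultimately
      show "0 \<le> ?f x" "?f x \<le> (1 - e^2) ^ k"
        by (auto intro: power_mono)
    qed
    show "0 \<le> integral {c..d} ?f"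
      using bounds by (intro integral_nonneg intg) auto
    have "integral {c..d} ?f \<le> integral {c..d} (\<lambda>_. (1 - e^2) ^ k)"
      using bounds by (intro integral_le intg) auto
    also have "\<dots> \<le> (1 - e^2) ^ k"
      using that order_trans[OF bounds[of c]] by (simp add: mult_left_le_one_le)
    finally show "integral {c..d} ?f \<le> (1 - e^2) ^ k" .
  qed
  have "0 \<le> integral {-1..u} ?f" "integral {-1..u} ?f \<le> (1 - e^2) ^ k"
    using assms by (auto intro!: tails)
  moreover have "0 \<le> integral {v..1} ?f" "integral {v..1} ?f \<le> (1 - e^2) ^ k"
    using assms by (auto intro!: tails)
  ultimately show "integral {u..v} ?f \<le> wallis_integral k"
    and "wallis_integral k - 2 * (1 - e^2) ^ k \<le> integral {u..v} ?f"
    using split by linarith+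
qed

locale laplace_concentration =
  fixes a b t0 \<kappa> :: real and T T' \<psi> :: "real \<Rightarrow> real"
  assumes interior: "a < t0" "t0 < b"
    and T_cont: "continuous_on {a..b} T"
    and T_sq_le: "\<And>t. t \<in> {a..b} \<Longrightarrow> T t ^ 2 \<le> 1"
    and T_mono: "mono_on {a..b} T"
    and T_t0: "T t0 = 0"
    and T_deriv: "\<And>t. t \<in> {a<..<b} \<Longrightarrow> (T has_real_derivative T' t) (at t)"
    and T'_cont: "isCont T' t0"
    and T'_pos: "T' t0 > 0"
    and psi_cont: "continuous_on {a..b} \<psi>"
    and psi_nonneg: "\<And>t. t \<in> {a..b} \<Longrightarrow> \<psi> t \<ge> 0"
    and psi_t0: "\<psi> t0 = \<kappa> * T' t0"
    and kappa_pos: "\<kappa> > 0"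
begin

lemma integrable_integrand: "{c..d} \<subseteq> {a..b} \<Longrightarrow> (\<lambda>t. (1 - T t ^ 2) ^ k * \<psi> t) integrable_on {c..d}"
  by (intro integrable_continuous_interval continuous_intros continuous_on_subset[OF psi_cont]
      continuous_on_subset[OF T_cont])

lemma integrable_psi: "{c..d} \<subseteq> {a..b} \<Longrightarrow> \<psi> integrable_on {c..d}"
  by (intro integrable_continuous_interval continuous_on_subset[OF psi_cont])

lemma integrand_nonneg: "t \<in> {a..b} \<Longrightarrow> 0 \<le> (1 - T t ^ 2) ^ k * \<psi> t"
  using T_sq_le psi_nonneg by simp

lemma window_exists:
  assumes "0 < \<epsilon>"
  obtains l u where "a < l" "l < t0" "t0 < u" "u < b"
    and "\<And>x. x \<in> {l..u} \<Longrightarrow> (\<kappa> - \<epsilon>) * T' x \<le> \<psi> x \<and> \<psi> x \<le> (\<kappa> + \<epsilon>) * T' x \<and> 0 < T' x"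
proof -
  have "isCont \<psi> t0"
    using continuous_on_interior[OF psi_cont] interior by (simp add: interior_atLeastAtMost_real)
  then have lim: "(\<psi> \<longlongrightarrow> \<psi> t0) (nhds t0)" "(T' \<longlongrightarrow> T' t0) (nhds t0)"
    using T'_cont by (simp_all add: isCont_def tendsto_at_iff_tendsto_nhds)
  have "\<forall>\<^sub>F x in nhds t0. 0 < \<psi> x - (\<kappa> - \<epsilon>) * T' x"
    by (rule order_tendstoD(1)[OF tendsto_diff[OF lim(1) tendsto_mult[OF tendsto_const lim(2)]]])
      (use assms T'_pos psi_t0 in \<open>simp add: algebra_simps\<close>)
  moreover have "\<forall>\<^sub>F x in nhds t0. 0 < (\<kappa> + \<epsilon>) * T' x - \<psi> x"
    by (rule order_tendstoD(1)[OF tendsto_diff[OF tendsto_mult[OF tendsto_const lim(2)] lim(1)]])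
      (use assms T'_pos psi_t0 in \<open>simp add: algebra_simps\<close>)
  moreover have "\<forall>\<^sub>F x in nhds t0. 0 < T' x"
    by (rule order_tendstoD(1)[OF lim(2) T'_pos])
  ultimately have "\<forall>\<^sub>F x in nhds t0. (\<kappa> - \<epsilon>) * T' x \<le> \<psi> x \<and> \<psi> x \<le> (\<kappa> + \<epsilon>) * T' x \<and> 0 < T' x"
    by eventually_elim auto
  then obtain d where "d > 0"
    and d: "\<And>x. dist x t0 < d \<Longrightarrow> (\<kappa> - \<epsilon>) * T' x \<le> \<psi> x \<and> \<psi> x \<le> (\<kappa> + \<epsilon>) * T' x \<and> 0 < T' x"
    unfolding eventually_nhds_metric by blast
  define \<delta> where "\<delta> = min (d / 2) (min ((t0 - a) / 2) ((b - t0) / 2))"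
  have \<delta>: "\<delta> \<le> d / 2" "\<delta> \<le> (t0 - a) / 2" "\<delta> \<le> (b - t0) / 2"
    unfolding \<delta>_def by (rule min.cobounded1 min.coboundedI2[OF min.cobounded1] min.coboundedI2[OF min.cobounded2])+
  have "0 < \<delta>"
    using \<open>d > 0\<close> interior by (simp add: \<delta>_def)
  then show ?thesis
    using \<delta> \<open>d > 0\<close>
    by (intro that[of "t0 - \<delta>" "t0 + \<delta>"] d) (auto simp: dist_real_def)
qed

lemma tail_bounds:
  assumes "a \<le> c" "c \<le> d" "d \<le> b" "0 \<le> \<eta>" and far: "\<And>t. t \<in> {c..d} \<Longrightarrow> \<eta> \<le> \<bar>T t\<bar>"
  shows "0 \<le> integral {c..d} (\<lambda>t. (1 - T t ^ 2) ^ k * \<psi> t)"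
    and "integral {c..d} (\<lambda>t. (1 - T t ^ 2) ^ k * \<psi> t) \<le> (1 - \<eta>^2) ^ k * integral {c..d} \<psi>"
proof -
  have sub: "{c..d} \<subseteq> {a..b}"
    using assms by auto
  show "0 \<le> integral {c..d} (\<lambda>t. (1 - T t ^ 2) ^ k * \<psi> t)"
    using sub by (intro integral_nonneg integrable_integrand integrand_nonneg) auto
  have "(1 - T t ^ 2) ^ k * \<psi> t \<le> (1 - \<eta>^2) ^ k * \<psi> t" if "t \<in> {c..d}" for t
  proof -
    have "\<eta>^2 \<le> T t ^ 2"
      using power_mono[OF far[OF that] \<open>0 \<le> \<eta>\<close>, of 2] by simp
    then show ?thesis
      using sub that T_sq_le psi_nonneg by (intro mult_right_mono power_mono) auto
  qed
  then have "integral {c..d} (\<lambda>t. (1 - T t ^ 2) ^ k * \<psi> t) \<le> integral {c..d} (\<lambda>t. (1 - \<eta>^2) ^ k * \<psi> t)"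
    using sub by (intro integral_le integrable_integrand integrable_continuous_interval continuous_intros
        continuous_on_subset[OF psi_cont]) auto
  then show "integral {c..d} (\<lambda>t. (1 - T t ^ 2) ^ k * \<psi> t) \<le> (1 - \<eta>^2) ^ k * integral {c..d} \<psi>"
    by simp
qed

lemma window_bounds:
  fixes k :: nat
  assumes lu: "a < l" "l < t0" "t0 < u" "u < b"
    and near: "\<And>x. x \<in> {l..u} \<Longrightarrow> (\<kappa> - \<epsilon>) * T' x \<le> \<psi> x \<and> \<psi> x \<le> (\<kappa> + \<epsilon>) * T' x \<and> 0 < T' x"
  defines "J \<equiv> integral {T l..T u} (\<lambda>x. (1 - x^2) ^ k)"
  shows "(\<kappa> - \<epsilon>) * J \<le> integral {l..u} (\<lambda>t. (1 - T t ^ 2) ^ k * \<psi> t)"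
    and "integral {l..u} (\<lambda>t. (1 - T t ^ 2) ^ k * \<psi> t) \<le> (\<kappa> + \<epsilon>) * J"
proof -
  have deriv: "(T has_real_derivative T' x) (at x within {l..u})" if "x \<in> {l..u}" for x
    using T_deriv[of x] that lu by (auto intro: has_field_derivative_at_within)
  have "T l \<le> T u"
    using lu by (intro mono_onD[OF T_mono]) auto
  moreover have "T ` {l..u} \<subseteq> {-1..1}"
    using lu T_sq_le by (auto simp: abs_square_le_1 abs_le_iff)
  ultimately have "((\<lambda>t. T' t *\<^sub>R (1 - T t ^ 2) ^ k) has_integral J) {l..u}"
    unfolding J_def using lu deriv
    by (intro has_integral_substitution[where c = "-1" and d = 1]) (auto intro!: continuous_intros)
  then have subst: "((\<lambda>t. T' t * (1 - T t ^ 2) ^ k) has_integral J) {l..u}"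
    by simp
  have factor: "0 \<le> (1 - T t ^ 2) ^ k" if "t \<in> {l..u}" for t
    using T_sq_le[of t] that lu by simp
  have int: "((\<lambda>t. (1 - T t ^ 2) ^ k * \<psi> t) has_integral integral {l..u} (\<lambda>t. (1 - T t ^ 2) ^ k * \<psi> t)) {l..u}"
    using lu by (intro integrable_integral integrable_integrand) auto
  show "(\<kappa> - \<epsilon>) * J \<le> integral {l..u} (\<lambda>t. (1 - T t ^ 2) ^ k * \<psi> t)"
  proof (rule has_integral_le[OF has_integral_mult_right[OF subst] int])
    fix t assume "t \<in> {l..u}"
    from mult_right_mono[OF conjunct1[OF near[OF this]] factor[OF this]]
    show "(\<kappa> - \<epsilon>) * (T' t * (1 - T t ^ 2) ^ k) \<le> (1 - T t ^ 2) ^ k * \<psi> t"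
      by (simp add: mult_ac)
  qed
  show "integral {l..u} (\<lambda>t. (1 - T t ^ 2) ^ k * \<psi> t) \<le> (\<kappa> + \<epsilon>) * J"
  proof (rule has_integral_le[OF int has_integral_mult_right[OF subst]])
    fix t assume "t \<in> {l..u}"
    from mult_right_mono[OF conjunct1[OF conjunct2[OF near[OF this]]] factor[OF this]]
    show "(1 - T t ^ 2) ^ k * \<psi> t \<le> (\<kappa> + \<epsilon>) * (T' t * (1 - T t ^ 2) ^ k)"
      by (simp add: mult_ac)
  qed
qed

lemma window_separation:
  assumes lu: "a < l" "l < t0" "t0 < u" "u < b" and pos: "\<And>x. x \<in> {l..u} \<Longrightarrow> 0 < T' x"
  obtains \<eta> where "0 < \<eta>" "-1 \<le> T l" "T l \<le> -\<eta>" "\<eta> \<le> T u" "T u \<le> 1"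
    and "\<And>t. t \<in> {a..l} \<union> {u..b} \<Longrightarrow> \<eta> \<le> \<bar>T t\<bar>"
proof -
  have increasing: "T x < T y" if "l \<le> x" "x < y" "y \<le> u" for x y
  proof (rule DERIV_pos_imp_increasing[OF \<open>x < y\<close>])
    fix w assume "x \<le> w" "w \<le> y"
    then have "w \<in> {l..u}" "w \<in> {a<..<b}"
      using that lu by auto
    then show "\<exists>d. DERIV T w :> d \<and> d > 0"
      using T_deriv pos by blast
  qed
  have "T l < 0" "0 < T u"
    using increasing[of l t0] increasing[of t0 u] lu T_t0 by auto
  moreover have "\<bar>T l\<bar> \<le> 1" "\<bar>T u\<bar> \<le> 1"
    using T_sq_le[of l] T_sq_le[of u] lu by (simp_all add: abs_square_le_1)
  moreover have "T t \<le> T l" if "t \<in> {a..l}" for t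
    using that lu by (intro mono_onD[OF T_mono]) auto
  moreover have "T u \<le> T t" if "t \<in> {u..b}" for t
    using that lu by (intro mono_onD[OF T_mono]) auto
  ultimately show ?thesis
    by (intro that[of "min (- T l) (T u)"]) fastforce+
qed

lemma laplace_bounds:
  assumes "0 < \<epsilon>" "\<epsilon> < \<kappa>"
  obtains q \<Psi> where "0 \<le> q" "q < 1" "0 \<le> \<Psi>"
    and "\<And>k. integral {a..b} (\<lambda>t. (1 - T t ^ 2) ^ k * \<psi> t) \<le> (\<kappa> + \<epsilon>) * wallis_integral k + q ^ k * \<Psi>"
    and "\<And>k. (\<kappa> - \<epsilon>) * (wallis_integral k - 2 * q ^ k) \<le> integral {a..b} (\<lambda>t. (1 - T t ^ 2) ^ k * \<psi> t)"
proof -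
  obtain l u where lu: "a < l" "l < t0" "t0 < u" "u < b"
    and near: "\<And>x. x \<in> {l..u} \<Longrightarrow> (\<kappa> - \<epsilon>) * T' x \<le> \<psi> x \<and> \<psi> x \<le> (\<kappa> + \<epsilon>) * T' x \<and> 0 < T' x"
    using window_exists[OF assms(1)] by blast
  obtain \<eta> where \<eta>: "0 < \<eta>" "-1 \<le> T l" "T l \<le> -\<eta>" "\<eta> \<le> T u" "T u \<le> 1"
    and far: "\<And>t. t \<in> {a..l} \<union> {u..b} \<Longrightarrow> \<eta> \<le> \<bar>T t\<bar>"
    using window_separation[OF lu] near by blast
  define q where "q = 1 - \<eta>^2"
  have "0 \<le> q" "q < 1"
    using \<eta> by (auto simp: q_def abs_square_le_1)
  have pieces: "integral {a..l} \<psi> + integral {l..u} \<psi> + integral {u..b} \<psi> = integral {a..b} \<psi>"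
    using lu integrable_psi by (simp add: Henstock_Kurzweil_Integration.integral_combine)
  have "0 \<le> integral {a..l} \<psi>" "0 \<le> integral {l..u} \<psi>" "0 \<le> integral {u..b} \<psi>"
    using lu psi_nonneg by (auto intro!: integral_nonneg integrable_psi)
  then have \<Psi>: "0 \<le> integral {a..b} \<psi>" "integral {a..l} \<psi> + integral {u..b} \<psi> \<le> integral {a..b} \<psi>"
    unfolding pieces[symmetric] by linarith+
  show ?thesis
  proof (rule that[OF \<open>0 \<le> q\<close> \<open>q < 1\<close> \<Psi>(1)])
    fix k
    let ?A = "\<lambda>c d. integral {c..d} (\<lambda>t. (1 - T t ^ 2) ^ k * \<psi> t)"
    let ?J = "integral {T l..T u} (\<lambda>x. (1 - x^2) ^ k)"
    have split: "?A a l + ?A l u + ?A u b = ?A a b"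
      using lu integrable_integrand by (simp add: Henstock_Kurzweil_Integration.integral_combine)
    have tails: "0 \<le> ?A a l" "?A a l \<le> q ^ k * integral {a..l} \<psi>"
      "0 \<le> ?A u b" "?A u b \<le> q ^ k * integral {u..b} \<psi>"
      using tail_bounds[of a l \<eta> k] tail_bounds[of u b \<eta> k] lu \<eta> far by (auto simp: q_def)
    have window: "(\<kappa> - \<epsilon>) * ?J \<le> ?A l u" "?A l u \<le> (\<kappa> + \<epsilon>) * ?J"
      using window_bounds[OF lu near] by blast+
    have wallis: "wallis_integral k - 2 * q ^ k \<le> ?J" "?J \<le> wallis_integral k"
      using wallis_integral_window[of "T l" \<eta> "T u" k] \<eta> by (auto simp: q_def)
    have "(\<kappa> - \<epsilon>) * (wallis_integral k - 2 * q ^ k) \<le> (\<kappa> - \<epsilon>) * ?J"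
      "(\<kappa> + \<epsilon>) * ?J \<le> (\<kappa> + \<epsilon>) * wallis_integral k"
      using wallis assms by (auto intro: mult_left_mono)
    moreover have "q ^ k * integral {a..l} \<psi> + q ^ k * integral {u..b} \<psi> \<le> q ^ k * integral {a..b} \<psi>"
      using \<Psi>(2) \<open>0 \<le> q\<close> by (simp add: mult_left_mono flip: distrib_left)
    ultimately show "?A a b \<le> (\<kappa> + \<epsilon>) * wallis_integral k + q ^ k * integral {a..b} \<psi>"
      and "(\<kappa> - \<epsilon>) * (wallis_integral k - 2 * q ^ k) \<le> ?A a b"
      using split tails window by linarith+
  qed
qed

lemma ratio_eventually_close:
  assumes "0 < \<epsilon>" "\<epsilon> < \<kappa>"
  shows "\<forall>\<^sub>F k in sequentially.
    \<bar>integral {a..b} (\<lambda>t. (1 - T t ^ 2) ^ k * \<psi> t) / wallis_integral k - \<kappa>\<bar> < 2 * \<epsilon>"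
proof -
  obtain q \<Psi> where q: "0 \<le> q" "q < 1" "0 \<le> \<Psi>"
    and upper: "\<And>k. integral {a..b} (\<lambda>t. (1 - T t ^ 2) ^ k * \<psi> t) \<le> (\<kappa> + \<epsilon>) * wallis_integral k + q ^ k * \<Psi>"
    and lower: "\<And>k. (\<kappa> - \<epsilon>) * (wallis_integral k - 2 * q ^ k) \<le> integral {a..b} (\<lambda>t. (1 - T t ^ 2) ^ k * \<psi> t)"
    using laplace_bounds[OF assms] by blast
  define r where "r k = q ^ k / wallis_integral k" for k
  have "r \<longlonglongrightarrow> 0"
    unfolding r_def[abs_def] by (rule power_over_wallis_integral_tendsto_0[OF q(1,2)])
  then have "(\<lambda>k. 2 * (\<kappa> - \<epsilon>) * r k) \<longlonglongrightarrow> 0" "(\<lambda>k. \<Psi> * r k) \<longlonglongrightarrow> 0"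
    by (auto intro: tendsto_mult_right_zero)
  then have "\<forall>\<^sub>F k in sequentially. 2 * (\<kappa> - \<epsilon>) * r k < \<epsilon> \<and> \<Psi> * r k < \<epsilon>"
    using assms(1) by (intro eventually_conj order_tendstoD(2))
  then show ?thesis
  proof (rule eventually_mono)
    fix k assume small: "2 * (\<kappa> - \<epsilon>) * r k < \<epsilon> \<and> \<Psi> * r k < \<epsilon>"
    have W: "wallis_integral k > 0"
      by (rule wallis_integral_pos)
    have "(\<kappa> - \<epsilon>) - 2 * (\<kappa> - \<epsilon>) * r k = (\<kappa> - \<epsilon>) * (wallis_integral k - 2 * q ^ k) / wallis_integral k"
      using W by (simp add: r_def field_simps)
    also have "\<dots> \<le> integral {a..b} (\<lambda>t. (1 - T t ^ 2) ^ k * \<psi> t) / wallis_integral k"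
      using lower[of k] W by (simp add: divide_right_mono)
    finally have "(\<kappa> - \<epsilon>) - 2 * (\<kappa> - \<epsilon>) * r k \<le> integral {a..b} (\<lambda>t. (1 - T t ^ 2) ^ k * \<psi> t) / wallis_integral k" .
    moreover have "integral {a..b} (\<lambda>t. (1 - T t ^ 2) ^ k * \<psi> t) / wallis_integral k
        \<le> ((\<kappa> + \<epsilon>) * wallis_integral k + q ^ k * \<Psi>) / wallis_integral k"
      using upper[of k] W by (simp add: divide_right_mono)
    moreover have "((\<kappa> + \<epsilon>) * wallis_integral k + q ^ k * \<Psi>) / wallis_integral k = (\<kappa> + \<epsilon>) + \<Psi> * r k"
      using W by (simp add: r_def field_simps)
    ultimately show "\<bar>integral {a..b} (\<lambda>t. (1 - T t ^ 2) ^ k * \<psi> t) / wallis_integral k - \<kappa>\<bar> < 2 * \<epsilon>"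
      using small by linarith
  qed
qed

theorem integral_over_wallis_tendsto:
  "(\<lambda>k. integral {a..b} (\<lambda>t. (1 - T t ^ 2) ^ k * \<psi> t) / wallis_integral k) \<longlonglongrightarrow> \<kappa>"
proof (rule tendstoI)
  fix e :: real assume "0 < e"
  then have "0 < min (e / 2) (\<kappa> / 2)" "min (e / 2) (\<kappa> / 2) < \<kappa>" "2 * min (e / 2) (\<kappa> / 2) \<le> e"
    using kappa_pos by auto
  from ratio_eventually_close[OF this(1,2)]
  show "\<forall>\<^sub>F k in sequentially. dist (integral {a..b} (\<lambda>t. (1 - T t ^ 2) ^ k * \<psi> t) / wallis_integral k) \<kappa> < e"
    by (rule eventually_mono) (use \<open>2 * min (e / 2) (\<kappa> / 2) \<le> e\<close> in \<open>simp add: dist_real_def\<close>)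
qed

end

locale ell_laplace =
  fixes z :: real
  assumes z_lt_1: "z < 1"
begin

definition s :: real where
  "s = sqrt (1 - z)"

definition T :: "real \<Rightarrow> real" where
  "T t = ((1 + s) * sin t ^ 2 - 1) / sqrt (ell_delta z t)"

definition T' :: "real \<Rightarrow> real" where
  "T' t = (1 + s)^2 * (sin t * cos t) * (1 - (1 - s) * sin t ^ 2) / (ell_delta z t * sqrt (ell_delta z t))"

definition psi :: "real \<Rightarrow> real" where
  "psi t = 1 / sqrt (ell_delta z t)"

definition t0 :: real where
  "t0 = arcsin (sqrt (1 / (1 + s)))"

lemma s_pos: "s > 0"
  using z_lt_1 by (simp add: s_def)

lemma z_eq: "z = (1 - s) * (1 + s)"
  using z_lt_1 by (simp add: s_def algebra_simps flip: power2_eq_square)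

lemma sqrt_delta_pos: "sqrt (ell_delta z t) > 0"
  using ell_delta_pos[OF z_lt_1] by simp

lemma T_has_derivative: "(T has_real_derivative T' t) (at t within S)"
proof -
  have "((\<lambda>t. (1 + s) * sin t ^ 2 - 1) has_real_derivative (1 + s) * (2 * sin t * cos t)) (at t within S)"
    by (auto intro!: derivative_eq_intros simp: power2_eq_square)
  note quotient = DERIV_divide[OF this sqrt_ell_delta_has_derivative[OF z_lt_1]]
  have "((1 + s) * (2 * u * v) * q - ((1 + s) * u ^ 2 - 1) * (- z * u * v / q)) / (q * q)
      = (1 + s)^2 * (u * v) * (1 - (1 - s) * u ^ 2) / (d * q)"
    if "q > 0" "q * q = d" "d = 1 - z * u ^ 2" for q d u v :: real
  proof -
    have "d > 0"
      using that by (metis mult_pos_pos)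
    then show ?thesis
      using that z_eq by (simp add: field_simps power2_eq_square) algebra
  qed
  from this[OF sqrt_delta_pos _ refl, of t]
  show ?thesis
    unfolding T_def[abs_def] T'_def using sqrt_delta_pos[of t] ell_delta_nonneg[OF z_lt_1, of t]
    by (intro DERIV_cong[OF quotient]) (simp_all add: ell_delta_def)
qed

lemma continuous_on_T: "continuous_on S T"
  unfolding T_def[abs_def]
  by (intro continuous_intros continuous_on_ell_delta) (auto simp: ell_delta_nonzero[OF z_lt_1])

lemma continuous_on_T': "continuous_on S T'"
  unfolding T'_def[abs_def]
  by (intro continuous_intros continuous_on_ell_delta) (auto simp: ell_delta_nonzero[OF z_lt_1])

lemma continuous_on_psi: "continuous_on S psi"
  unfolding psi_def[abs_def]
  by (intro continuous_intros continuous_on_ell_delta) (auto simp: ell_delta_nonzero[OF z_lt_1])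

lemma one_minus_T_sq: "1 - T t ^ 2 = (1 + s)^2 * ((sin t * cos t)^2 / ell_delta z t)"
proof -
  have "1 - z * u - ((1 + s) * u - 1)^2 = (1 + s)^2 * (u * (1 - u))" for u
    using z_eq by algebra
  from this[of "sin t ^ 2"]
  have "ell_delta z t - ((1 + s) * sin t ^ 2 - 1)^2 = (1 + s)^2 * (sin t * cos t)^2"
    by (simp add: ell_delta_def cos_squared_eq power_mult_distrib)
  then show ?thesis
    using ell_delta_pos[OF z_lt_1, of t] unfolding T_def
    by (simp add: power_divide field_simps)
qed

lemma T_sq_le: "T t ^ 2 \<le> 1"
  using one_minus_T_sq[of t] ell_delta_pos[OF z_lt_1, of t] by (smt (verit) divide_nonneg_pos mult_nonneg_nonneg zero_le_power2)

lemma T'_nonneg: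
  assumes "t \<in> {0..pi/2}" shows "T' t \<ge> 0"
proof -
  have "sin t \<ge> 0" "cos t \<ge> 0"
    using assms by (auto intro: sin_ge_zero cos_ge_zero)
  moreover have "(1 - s) * sin t ^ 2 \<le> 1"
    using s_pos abs_square_le_1[of "sin t"] by (cases "s \<le> 1") (auto intro: mult_le_one mult_nonpos_nonneg)
  ultimately show ?thesis
    unfolding T'_def using ell_delta_pos[OF z_lt_1, of t] sqrt_delta_pos[of t]
    by (intro divide_nonneg_pos mult_nonneg_nonneg) auto
qed

lemma T_mono: "mono_on {0..pi/2} T"
proof (rule mono_onI)
  fix x y assume "x \<in> {0..pi/2}" "y \<in> {0..pi/2}" "x \<le> y"
  show "T x \<le> T y"
  proof (rule DERIV_nonneg_imp_increasing_open[OF \<open>x \<le> y\<close> _ continuous_on_T])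
    fix w assume "x < w" "w < y"
    then have "w \<in> {0..pi/2}"
      using \<open>x \<in> {0..pi/2}\<close> \<open>y \<in> {0..pi/2}\<close> by auto
    then show "\<exists>d. DERIV T w :> d \<and> 0 \<le> d"
      using T_has_derivative T'_nonneg by blast
  qed
qed

lemma t0: "sin t0 ^ 2 = 1 / (1 + s)" "cos t0 ^ 2 = s / (1 + s)" "0 < t0" "t0 < pi/2"
proof -
  have u: "0 < sqrt (1 / (1 + s))" "sqrt (1 / (1 + s)) < 1"
    using s_pos by auto
  then have "sin t0 = sqrt (1 / (1 + s))"
    unfolding t0_def by (intro sin_arcsin) linarith+
  then show "sin t0 ^ 2 = 1 / (1 + s)"
    using s_pos by simp
  then show "cos t0 ^ 2 = s / (1 + s)"
    using s_pos by (simp add: cos_squared_eq field_simps)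
  have "-1 < sqrt (1 / (1 + s))"
    using u(1) by linarith
  from arcsin_lt_bounded[OF this u(2)] show "t0 < pi/2"
    by (simp add: t0_def)
  show "0 < t0"
    using u arcsin_less_mono[of 0 "sqrt (1 / (1 + s))"] by (simp add: t0_def)
qed

lemma delta_t0: "ell_delta z t0 = s"
proof -
  have "1 - z * (1 / (1 + s)) = s"
    using s_pos by (simp add: field_simps) (use z_eq in algebra)
  then show ?thesis
    using t0(1) by (simp add: ell_delta_def)
qed

lemma T_t0: "T t0 = 0"
  using t0(1) s_pos by (simp add: T_def)

lemma T'_t0: "T' t0 = 2"
proof -
  have sc: "sin t0 * cos t0 = sqrt s / (1 + s)"
  proof -
    have "(sin t0 * cos t0) ^ 2 = sin t0 ^ 2 * cos t0 ^ 2"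
      by (rule power_mult_distrib)
    also have "\<dots> = (sqrt s / (1 + s)) ^ 2"
      unfolding t0(1,2) power_divide using s_pos by (simp add: power2_eq_square)
    finally have "(sin t0 * cos t0) ^ 2 = (sqrt s / (1 + s)) ^ 2" .
    moreover have "sin t0 * cos t0 \<ge> 0"
      using t0 by (intro mult_nonneg_nonneg sin_ge_zero cos_ge_zero) auto
    ultimately show ?thesis
      using s_pos by (simp add: power2_eq_iff_nonneg)
  qed
  have "1 - (1 - s) * (1 / (1 + s)) = 2 * s / (1 + s)"
    using s_pos by (simp add: field_simps)
  moreover have "sqrt s > 0"
    using s_pos by simp
  ultimately show ?thesis
    unfolding T'_def sc t0(1) delta_t0 using s_pos by (simp add: power2_eq_square)
qed

sublocale laplace_concentration 0 "pi/2" t0 "1 / (2 * sqrt s)" T T' psi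
proof
  show "0 < t0" "t0 < pi/2"
    using t0 by auto
  show "T t0 = 0" "0 < T' t0"
    by (simp_all add: T_t0 T'_t0)
  show "isCont T' t0"
    using continuous_on_T'[of UNIV] by (simp add: continuous_on_eq_continuous_at)
  show "psi t0 = 1 / (2 * sqrt s) * T' t0"
    by (simp add: psi_def delta_t0 T'_t0)
  show "0 < 1 / (2 * sqrt s)"
    using s_pos by simp
  show "\<And>t. t \<in> {0..pi/2} \<Longrightarrow> 0 \<le> psi t"
    by (simp add: psi_def ell_delta_nonneg[OF z_lt_1])
qed (auto intro: continuous_on_T continuous_on_psi T_has_derivative T_sq_le T_mono)

lemma ell_G_eq: "ell_G z k = (z / (1 + s)) ^ (2 * k) * integral {0..pi/2} (\<lambda>t. (1 - T t ^ 2) ^ k * psi t)"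
proof -
  have "ell_G_integrand z k t = (1 / (1 + s)) ^ (2 * k) * ((1 - T t ^ 2) ^ k * psi t)" for t
  proof -
    have "(1 / (1 + s)) ^ (2 * k) * ((1 + s)^2 * x) ^ k = ((1 / (1 + s))^2 * ((1 + s)^2 * x)) ^ k" for x
      by (simp only: power_mult power_mult_distrib)
    also have "((1 / (1 + s))^2 * ((1 + s)^2 * x)) ^ k = x ^ k" for x
      using s_pos by (simp add: power_divide)
    finally show ?thesis
      unfolding ell_G_integrand_def psi_def one_minus_T_sq power_mult by (simp add: power_divide)
  qed
  then have "ell_G_integrand z k = (\<lambda>t. (1 / (1 + s)) ^ (2 * k) * ((1 - T t ^ 2) ^ k * psi t))"
    by (rule ext)
  then show ?thesis
    by (simp add: ell_G_def power_divide)
qed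

lemma ell_G_product_limit:
  assumes "z \<noteq> 0"
  shows "(\<lambda>j. (2 * real j + 1) * ell_G z j * ell_G z (j + 1) * ((1 + s) / z) ^ (4 * j + 2))
    \<longlonglongrightarrow> pi / (2 * s)"
proof -
  define A where "A k = integral {0..pi/2} (\<lambda>t. (1 - T t ^ 2) ^ k * psi t)" for k
  define W where "W = wallis_integral"
  have lim: "(\<lambda>j. ((2 * real j + 1) * W j * W (j + 1)) * (A j / W j) * (A (j + 1) / W (j + 1)))
      \<longlonglongrightarrow> 2 * pi * (1 / (2 * sqrt s)) * (1 / (2 * sqrt s))"
    unfolding A_def W_def
    using tendsto_mult[OF tendsto_mult[OF wallis_integral_product_limit integral_over_wallis_tendsto]
        LIMSEQ_ignore_initial_segment[OF integral_over_wallis_tendsto, of 1]] .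
  have eq: "((2 * real j + 1) * W j * W (j + 1)) * (A j / W j) * (A (j + 1) / W (j + 1))
      = (2 * real j + 1) * ell_G z j * ell_G z (j + 1) * ((1 + s) / z) ^ (4 * j + 2)" for j
  proof -
    have "W j \<noteq> 0" "W (j + 1) \<noteq> 0"
      using wallis_integral_pos by (simp_all add: W_def dual_order.strict_implies_not_eq)
    then have L: "((2 * real j + 1) * W j * W (j + 1)) * (A j / W j) * (A (j + 1) / W (j + 1))
        = (2 * real j + 1) * A j * A (j + 1)"
      by (simp add: field_simps)
    have "c ^ (2 * j) * c ^ (2 * (j + 1)) * (1 / c) ^ (4 * j + 2) = 1" if "c \<noteq> 0" for c :: real
      using that by (simp add: power_one_over field_simps flip: power_add)
    from this[of "z / (1 + s)"]
    have P: "(z / (1 + s)) ^ (2 * j) * (z / (1 + s)) ^ (2 * (j + 1)) * ((1 + s) / z) ^ (4 * j + 2) = 1"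
      using assms s_pos by simp
    have "(2 * real j + 1) * ell_G z j * ell_G z (j + 1) * ((1 + s) / z) ^ (4 * j + 2)
        = (2 * real j + 1) * A j * A (j + 1)
          * ((z / (1 + s)) ^ (2 * j) * (z / (1 + s)) ^ (2 * (j + 1)) * ((1 + s) / z) ^ (4 * j + 2))"
      unfolding ell_G_eq A_def[symmetric] by (simp only: mult_ac)
    then show ?thesis
      unfolding L P by simp
  qed
  have limit: "2 * pi * (1 / (2 * sqrt s)) * (1 / (2 * sqrt s)) = pi / (2 * s)"
    using s_pos by (simp add: field_simps)
  show ?thesis
    using lim unfolding eq limit .
qed


lemma ell_cf_term_over_power:
  assumes "z \<noteq> 0"
  shows "ell_cf_term z j / (((1 + s)^2 / z)^2) ^ j
    = ellK z * (1 + s)^2 / z^2 / ((2 * real j + 1) * ell_G z j * ell_G z (j + 1) * ((1 + s) / z) ^ (4 * j + 2))"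
proof -
  have "K * z ^ (2 * j) / g / ((w ^ 2 / z) ^ 2) ^ j = K * w ^ 2 / z ^ 2 / (g * (w / z) ^ (4 * j + 2))"
    if "w \<noteq> 0" "g \<noteq> 0" for K w g :: real
  proof -
    have "((w ^ 2 / z) ^ 2) ^ j = w ^ (4 * j) / z ^ (2 * j)"
      by (simp add: power_divide flip: power_mult)
    moreover have "(w / z) ^ (4 * j + 2) = w ^ 2 / z ^ 2 * (w ^ (4 * j) / z ^ (4 * j))"
      by (metis add.commute power_add power_divide)
    moreover have "z ^ (4 * j) = z ^ (2 * j) * z ^ (2 * j)"
      by (simp flip: power_add)
    ultimately show ?thesis
      using that assms by (simp add: field_simps)
  qed
  moreover have "(2 * real j + 1) * ell_G z j * ell_G z (Suc j) \<noteq> 0"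
    using ell_G_pos[OF z_lt_1 assms] by (simp add: less_imp_neq[symmetric])
  ultimately show ?thesis
    using s_pos unfolding ell_cf_term_def by simp
qed
end

lemma contracting_recurrence_tendsto_0:
  fixes e f :: "nat \<Rightarrow> real"
  assumes "0 \<le> q" "q < 1" and f: "f \<longlonglongrightarrow> 0" and rec: "\<And>n. e (Suc n) = q * e n + f (Suc n)"
  shows "e \<longlonglongrightarrow> 0"
proof (rule LIMSEQ_I)
  fix r :: real assume "r > 0"
  then obtain N where N: "\<And>n. n \<ge> N \<Longrightarrow> \<bar>f n\<bar> < r * (1 - q) / 2"
    using LIMSEQ_D[OF f, of "r * (1 - q) / 2"] assms by auto
  define g where "g n = max (\<bar>e n\<bar> - r / 2) 0" for n
  have step: "g (Suc n) \<le> q * g n" if "n \<ge> N" for n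
  proof -
    have "\<bar>e (Suc n)\<bar> \<le> q * \<bar>e n\<bar> + \<bar>f (Suc n)\<bar>"
      using rec[of n] assms abs_triangle_ineq[of "q * e n" "f (Suc n)"] by (simp add: abs_mult)
    then have "\<bar>e (Suc n)\<bar> - r / 2 < q * (\<bar>e n\<bar> - r / 2)"
      using N[of "Suc n"] that by (simp add: algebra_simps)
    also have "\<dots> \<le> q * g n"
      using assms by (intro mult_left_mono) (auto simp: g_def)
    finally show ?thesis
      using assms by (simp add: g_def)
  qed
  have geom: "g (N + m) \<le> q ^ m * g N" for m
  proof (induction m)
    case (Suc m)
    have "g (N + Suc m) \<le> q * g (N + m)"
      using step[of "N + m"] by simp
    also have "\<dots> \<le> q * (q ^ m * g N)"
      using Suc.IH assms(1) by (rule mult_left_mono)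
    finally show ?case
      by (simp add: mult.assoc)
  qed simp
  have "(\<lambda>m. q ^ m * g N) \<longlonglongrightarrow> 0 * g N"
    using assms by (intro tendsto_mult tendsto_const LIMSEQ_power_zero) auto
  then obtain M where M: "\<And>m. m \<ge> M \<Longrightarrow> q ^ m * g N < r / 2"
    using LIMSEQ_D[of _ 0 "r / 2"] \<open>r > 0\<close> by fastforce
  have "\<bar>e n\<bar> < r" if "n \<ge> N + M" for n
  proof -
    have "N + (n - N) = n" "M \<le> n - N"
      using that by auto
    then have "g n < r / 2"
      using geom[of "n - N"] M[of "n - N"] by simp
    moreover have "\<bar>e n\<bar> - r / 2 \<le> g n"
      by (simp add: g_def)
    ultimately show ?thesis
      by linarith
  qed
  then show "\<exists>no. \<forall>n\<ge>no. norm (e n - 0) < r"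
    by auto
qed

lemma partial_sums_over_power_tendsto:
  fixes x :: "nat \<Rightarrow> real"
  assumes "c > 1" and lim: "(\<lambda>j. x j / c ^ j) \<longlonglongrightarrow> D"
  shows "(\<lambda>n. (\<Sum>j\<le>n. x j) / c ^ (n + 1)) \<longlonglongrightarrow> D / (c - 1)"
proof -
  define e where "e n = (\<Sum>j\<le>n. x j) / c ^ (n + 1) - D / (c - 1)" for n
  define f where "f n = (x n / c ^ n - D) / c" for n
  have "f \<longlonglongrightarrow> (D - D) / c"
    unfolding f_def[abs_def] by (intro tendsto_intros lim) (use assms in auto)
  then have f: "f \<longlonglongrightarrow> 0"
    by simp
  have rec: "e (Suc n) = (1 / c) * e n + f (Suc n)" for n
  proof -
    have "c \<noteq> 0" "c - 1 \<noteq> 0"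
      using assms by auto
    have "e (Suc n) = (1 / c) * ((\<Sum>j\<le>n. x j) / c ^ (n + 1)) + (x (Suc n) / c ^ Suc n) / c - D / (c - 1)"
      using \<open>c \<noteq> 0\<close> by (simp add: e_def add_divide_distrib)
    also have "\<dots> = (1 / c) * e n + f (Suc n)"
      using \<open>c \<noteq> 0\<close> \<open>c - 1 \<noteq> 0\<close> unfolding e_def f_def by (simp add: field_simps)
    finally show ?thesis .
  qed
  have "e \<longlonglongrightarrow> 0"
    by (rule contracting_recurrence_tendsto_0[OF _ _ f rec]) (use assms in auto)
  then have "(\<lambda>n. e n + D / (c - 1)) \<longlonglongrightarrow> 0 + D / (c - 1)"
    by (intro tendsto_intros)
  then show ?thesis
    by (simp add: e_def)
qed

lemma ell_ratio_gt_1: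
  fixes z :: real
  assumes "z < 1" "z \<noteq> 0"
  shows "((1 + sqrt (1 - z))^2 / z)^2 - 1 = 4 * sqrt (1 - z) * (1 + sqrt (1 - z))^2 / z^2"
    and "((1 + sqrt (1 - z))^2 / z)^2 > 1"
proof -
  interpret ell_laplace z
    by standard fact
  have "((1 + s)^2 / z)^2 - 1 = 4 * s * (1 + s)^2 / z^2"
    using z_eq assms(2) by (simp add: field_simps power2_eq_square) algebra
  moreover have "4 * s * (1 + s)^2 / z^2 > 0"
    using s_pos assms(2) by simp
  ultimately show "((1 + sqrt (1 - z))^2 / z)^2 - 1 = 4 * sqrt (1 - z) * (1 + sqrt (1 - z))^2 / z^2"
    and "((1 + sqrt (1 - z))^2 / z)^2 > 1"
    unfolding s_def by simp_all
qed

lemma ell_cf_series_growth: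
  fixes z :: real
  assumes "z < 1" "z \<noteq> 0"
  shows "(\<lambda>n. (\<Sum>j\<le>n. ell_cf_term z j) / (((1 + sqrt (1 - z))^2 / z)^2) ^ (n + 1)) \<longlonglongrightarrow> ellK z / (2 * pi)"
proof -
  interpret ell_laplace z
    by standard fact
  define \<rho> where "\<rho> = ((1 + s)^2 / z)^2"
  have \<rho>: "\<rho> > 1" "\<rho> - 1 = 4 * s * (1 + s)^2 / z^2"
    using ell_ratio_gt_1[OF assms] unfolding \<rho>_def s_def by simp_all
  have "(\<lambda>j. ellK z * (1 + s)^2 / z^2
      / ((2 * real j + 1) * ell_G z j * ell_G z (j + 1) * ((1 + s) / z) ^ (4 * j + 2)))
      \<longlonglongrightarrow> ellK z * (1 + s)^2 / z^2 / (pi / (2 * s))"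
    using s_pos by (intro tendsto_divide tendsto_const ell_G_product_limit assms(2)) auto
  then have "(\<lambda>j. ell_cf_term z j / \<rho> ^ j) \<longlonglongrightarrow> ellK z * (1 + s)^2 / z^2 / (pi / (2 * s))"
    unfolding \<rho>_def ell_cf_term_over_power[OF assms(2)] by simp
  from partial_sums_over_power_tendsto[OF \<rho>(1) this]
  have lim: "(\<lambda>n. (\<Sum>j\<le>n. ell_cf_term z j) / \<rho> ^ (n + 1))
      \<longlonglongrightarrow> ellK z * (1 + s)^2 / z^2 / (pi / (2 * s)) / (4 * s * (1 + s)^2 / z^2)"
    unfolding \<rho>(2) .
  have "K * u / v / (pi / (2 * s)) / (4 * s * u / v) = K / (2 * pi)" if "u \<noteq> 0" "v \<noteq> 0" for K u v
    using that s_pos by (simp add: field_simps)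
  moreover have "(1 + s)^2 \<noteq> 0" "z^2 \<noteq> 0"
    using s_pos assms(2) by simp_all
  ultimately have "ellK z * (1 + s)^2 / z^2 / (pi / (2 * s)) / (4 * s * (1 + s)^2 / z^2) = ellK z / (2 * pi)"
    by blast
  with lim show ?thesis
    unfolding \<rho>_def s_def by simp
qed

lemma reciprocal_of_geometric_growth:
  fixes S :: "nat \<Rightarrow> real"
  assumes lim: "(\<lambda>n. S n / \<rho> ^ (n + 1)) \<longlonglongrightarrow> L" and "L \<noteq> 0" "c \<noteq> 0" "\<rho> > 1"
  shows "(\<lambda>n. - 1 / (c * S n)) \<sim>[sequentially] (\<lambda>n. - (1 / (c * L)) / \<rho> ^ (n + 1))"
    and "(\<lambda>n. - 1 / (c * S n)) \<longlonglongrightarrow> 0"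
proof -
  have "(\<lambda>n. L / (S n / \<rho> ^ (n + 1))) \<longlonglongrightarrow> L / L"
    by (intro tendsto_divide tendsto_const lim assms(2))
  moreover have "(- 1 / (c * S n)) / (- (1 / (c * L)) / \<rho> ^ (n + 1)) = L / (S n / \<rho> ^ (n + 1))" for n
    using assms(2-4) by (cases "S n = 0") (simp_all add: field_simps)
  ultimately show equiv: "(\<lambda>n. - 1 / (c * S n)) \<sim>[sequentially] (\<lambda>n. - (1 / (c * L)) / \<rho> ^ (n + 1))"
    using assms(2) by (intro asymp_equivI') simp
  have "(\<lambda>n. - (1 / (c * L)) * (1 / \<rho>) ^ (n + 1)) \<longlonglongrightarrow> - (1 / (c * L)) * 0"
    using assms(4) by (intro tendsto_mult tendsto_const LIMSEQ_ignore_initial_segment[OF LIMSEQ_power_zero]) simp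
  then have "(\<lambda>n. - (1 / (c * L)) / \<rho> ^ (n + 1)) \<longlonglongrightarrow> 0"
    by (simp add: power_one_over)
  with asymp_equiv_sym[THEN iffD1, OF equiv] show "(\<lambda>n. - 1 / (c * S n)) \<longlonglongrightarrow> 0"
    by (rule asymp_equiv_tendsto_transfer)
qed

theorem theorem7p2:
  fixes z :: real
  assumes "z < 1" and "z \<noteq> 0"
  defines "a \<equiv> (\<lambda>n::nat. if n = 0 then 2 - z else 4 * real n * (2 - z))"
      and "b \<equiv> (\<lambda>n::nat. - ((2 * real n + 1)^2 * z^2))"
  shows "(\<lambda>n. cf_p a b n / cf_q a b n) \<longlonglongrightarrow> 2 * ellE z / ellK z \<and>
         (\<lambda>n. 2 * ellE z / ellK z - cf_p a b n / cf_q a b n) \<sim>[sequentially]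
           (\<lambda>n. - (2 * pi / (ellK z)^2) / (((1 + sqrt (1 - z))^2 / z) ^ (2 * n + 2)))"
proof -
  have "ellK z > 0"
    using ell_G_pos[OF assms(1,2), of 0] by (simp add: ell_G_0)
  note growth = reciprocal_of_geometric_growth[OF ell_cf_series_growth[OF assms(1,2)] _ _
      ell_ratio_gt_1(2)[OF assms(1,2)], of "ellK z"]
  have error: "(\<lambda>n. 2 * ellE z / ellK z - cf_p a b n / cf_q a b n) = (\<lambda>n. - 1 / (ellK z * (\<Sum>j\<le>n. ell_cf_term z j)))"
    using ell_cf_error[OF assms(1,2)] unfolding a_def b_def by blast
  have rate: "- (1 / (ellK z * (ellK z / (2 * pi)))) / (((1 + sqrt (1 - z))^2 / z)^2) ^ (n + 1)
      = - (2 * pi / (ellK z)^2) / (((1 + sqrt (1 - z))^2 / z) ^ (2 * n + 2))" for n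
    by (simp add: power2_eq_square power_mult flip: mult_2)
  have "(\<lambda>n. 2 * ellE z / ellK z - cf_p a b n / cf_q a b n) \<longlonglongrightarrow> 0"
    using growth(2) \<open>ellK z > 0\<close> unfolding error by simp
  then have "(\<lambda>n. 2 * ellE z / ellK z - (2 * ellE z / ellK z - cf_p a b n / cf_q a b n))
      \<longlonglongrightarrow> 2 * ellE z / ellK z - 0"
    by (intro tendsto_diff tendsto_const)
  moreover have "(\<lambda>n. 2 * ellE z / ellK z - cf_p a b n / cf_q a b n) \<sim>[sequentially]
      (\<lambda>n. - (2 * pi / (ellK z)^2) / (((1 + sqrt (1 - z))^2 / z) ^ (2 * n + 2)))"
    using growth(1) \<open>ellK z > 0\<close> unfolding error rate by simp
  ultimately show ?thesis
    by simp
qed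

end
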